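(* If the sequent $\Phi\Rightarrow\Psi$ has a co-proof in $\mathsf{K}\mu_\omega$, then $\bigwedge\Phi\to\bigvee\Psi$ is valid, i.e. every model satisfying (at its root) all formulas of $\Phi$ satisfies some formula of $\Psi$.
   Context: Formulas ($\mathsf{L}_\mu$): built from variables $x$ and negated variables $\neg x$ (literals) by $\square\alpha$, $\diamond\alpha$, $\bigwedge\Gamma$, $\bigvee\Gamma$ ($\Gamma$ finite), $\mu\phi$, $\nu\phi$ where $\phi=\lambda x.\alpha$ with $\neg x$ not occurring in $\alpha$; $\phi\beta:=\alpha[x:=\beta]$; $\top=\bigwedge\emptyset$, $\bot=\bigvee\emptyset$; $\alpha^\bot$ is the dual (negation) obtained by swapping $x/\neg x$, $\bigwedge/\bigvee$, $\square/\diamond$, $\mu/\nu$ (with $(\mu\lambda x.\alpha)^\bot=\nu\lambda x.(\alpha[x:=\neg x])^\bot$). Semantics: standard semantics over tree-shaped Kripke models (a tree with a valuation of variables at each node), $\neg x$ true where $x$ is false, modalities over children, $\mu,\nu$ least/greatest fixed points; valid = true at the root of every model. Immediate subformula $\alpha\rhd\beta$: $\beta\in\Gamma$ for $\alpha=\bigwedge\Gamma,\bigvee\Gamma$; $\alpha=\square\beta,\diamond\beta$; or $\alpha=\sigma\phi$, $\beta=\phi(\sigma\phi)$. A thread is a sequence with $\alpha_i\rhd\alpha_{i+1}$. Complexity: literals $0$, $\mathrm{rk}(\triangle\alpha)=\mathrm{rk}(\alpha)+1$, $\mathrm{rk}(\bigcirc\Gamma)=\max_{\gamma\in\Gamma}\mathrm{rk}(\gamma)+1$,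 $\mathrm{rk}(\sigma\lambda x.\alpha)=\mathrm{rk}(\alpha)+1$. In an infinite thread the formulas occurring infinitely often have a unique one of minimal complexity, of form $\sigma\phi$; the thread is a $\nu$-thread if $\sigma=\nu$, else a $\mu$-thread. Sequents $\Phi\Rightarrow\Psi$ have finite sequences of formulas on each side. Rules of the calculus: structural rules exchange, contraction, weakening on either side; logical rules: ($\bigwedge$L) from $\gamma,\Phi\Rightarrow\Psi$ infer $\bigwedge\Gamma,\Phi\Rightarrow\Psi$ ($\gamma\in\Gamma$); ($\bigvee$L) from all $\gamma,\Phi\Rightarrow\Psi$ ($\gamma\in\Gamma$) infer $\bigvee\Gamma,\Phi\Rightarrow\Psi$; ($\sigma$L) from $\phi(\sigma\phi),\Phi\Rightarrow\Psi$ infer $\sigma\phi,\Phi\Rightarrow\Psi$; ($\diamond$L) from $\alpha,\Phi\Rightarrow\Psi$ infer $\diamond\alpha,\square\Phi\Rightarrow\diamond\Psi$; ($\bigwedge$R) from all $\Phi\Rightarrow\Psi,\gamma$ infer $\Phi\Rightarrow\Psi,\bigwedge\Gamma$; ($\bigvee$R) from $\Phi\Rightarrow\Psi,\gamma$ ($\gamma\in\Gamma$) infer $\Phi\Rightarrow\Psi,\bigvee\Gamma$; ($\sigma$R) from $\Phi\Rightarrow\Psi,\phi(\sigma\phi)$ infer $\Phi\Rightarrow\Psi,\sigma\phi$; ($\square$R) from $\Phi\Rightarrow\Psi,\alpha$ infer $\square\Phi\Rightarrow\diamond\Psi,\square\alpha$; axioms $x,\neg x\Rightarrow$, $\Rightarrow\neg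 x,x$ and $x\Rightarrow x$ for variables $x$. In each logical rule the displayed compound formula in the conclusion is principal and the displayed immediate subformula in a premise is minor. A trace along a branch of a derivation follows a formula occurrence upward: through a logical rule a principal occurrence moves to the minor occurrence and side occurrences move to their copies; through structural rules occurrences move to the corresponding occurrences. The thread supported by a trace records the formula each time it moves through a principal position (so consecutive formulas satisfy $\rhd$). A co-proof in $\mathsf{K}\mu_\omega$ is a (possibly infinite) tree of sequents built by these rules, all leaves being axioms, every infinite branch containing infinitely many logical rules, such that every infinite branch carries an infinite trace starting on the left whose thread is a $\mu$-thread or an infinite trace starting on the right whose thread is a $\nu$-thread. *)

theory Defs
  imports Main "HOL-Library.Infinite_Set"
begin

section \<open>Formulas of L_mu (locally nameless representation)\<close>

text \<open>Variables bound by a fixed point binder are de Bruijn indices BVar k; they occur only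
  positively (there is no negated bound variable), which encodes the side condition that
  the negation of the bound variable does not occur in the body.  Finite sets Gamma of
  conjuncts / disjuncts are represented by lists.\<close>

datatype 'v fm =
    Var 'v
  | NVar 'v
  | BVar nat
  | Box "'v fm"
  | Dia "'v fm"
  | Conj "'v fm list"
  | Disj "'v fm list"
  | Mu "'v fm"
  | Nu "'v fm"

fun lc :: "nat \<Rightarrow> 'v fm \<Rightarrow> bool" where
  "lc d (Var x) = True"
| "lc d (NVar x) = True"
| "lc d (BVar k) = (k < d)"
| "lc d (Box a) = lc d a"
| "lc d (Dia a) = lc d a"
| "lc d (Conj G) = (\<forall>g\<in>set G. lc d g)"
| "lc d (Disj G) = (\<forall>g\<in>set G. lc d g)"
| "lc d (Mu a) = lc (Suc d) a"
| "lc d (Nu a) = lc (Suc d) a"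

text \<open>Substitution of b for the bound variable with index d (b is closed in all uses).\<close>
fun subst :: "nat \<Rightarrow> 'v fm \<Rightarrow> 'v fm \<Rightarrow> 'v fm" where
  "subst d b (Var x) = Var x"
| "subst d b (NVar x) = NVar x"
| "subst d b (BVar k) = (if k = d then b else BVar k)"
| "subst d b (Box a) = Box (subst d b a)"
| "subst d b (Dia a) = Dia (subst d b a)"
| "subst d b (Conj G) = Conj (map (subst d b) G)"
| "subst d b (Disj G) = Disj (map (subst d b) G)"
| "subst d b (Mu a) = Mu (subst (Suc d) b a)"
| "subst d b (Nu a) = Nu (subst (Suc d) b a)"

fun unfold :: "'v fm \<Rightarrow> 'v fm" where
  "unfold (Mu a) = subst 0 (Mu a) a"
| "unfold (Nu a) = subst 0 (Nu a) a"
| "unfold f = f"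

text \<open>Complexity (rank); the max over the empty set is taken to be 0.\<close>
fun rk :: "'v fm \<Rightarrow> nat" where
  "rk (Var x) = 0"
| "rk (NVar x) = 0"
| "rk (BVar k) = 0"
| "rk (Box a) = Suc (rk a)"
| "rk (Dia a) = Suc (rk a)"
| "rk (Conj G) = Suc (fold max (map rk G) 0)"
| "rk (Disj G) = Suc (fold max (map rk G) 0)"
| "rk (Mu a) = Suc (rk a)"
| "rk (Nu a) = Suc (rk a)"

section \<open>Semantics over tree-shaped Kripke models\<close>

text \<open>A tree is a nonempty prefix-closed set of words over an arbitrary type 'n; the root is [],
  the children of w are the words w@[c] in the tree.\<close>
definition tree_model :: "'n list set \<Rightarrow> bool" where
  "tree_model T \<longleftrightarrow> [] \<in> T \<and> (\<forall>w c. w @ [c] \<in> T \<longrightarrow> w \<in> T)"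

fun sem :: "'n list set \<Rightarrow> ('n list \<Rightarrow> 'v \<Rightarrow> bool) \<Rightarrow> (nat \<Rightarrow> 'n list set) \<Rightarrow> 'v fm \<Rightarrow> 'n list set" where
  "sem T V \<rho> (Var x) = {w \<in> T. V w x}"
| "sem T V \<rho> (NVar x) = {w \<in> T. \<not> V w x}"
| "sem T V \<rho> (BVar k) = \<rho> k \<inter> T"
| "sem T V \<rho> (Box a) = {w \<in> T. \<forall>c. w @ [c] \<in> T \<longrightarrow> w @ [c] \<in> sem T V \<rho> a}"
| "sem T V \<rho> (Dia a) = {w \<in> T. \<exists>c. w @ [c] \<in> T \<and> w @ [c] \<in> sem T V \<rho> a}"
| "sem T V \<rho> (Conj G) = {w \<in> T. \<forall>g\<in>set G. w \<in> sem T V \<rho> g}"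
| "sem T V \<rho> (Disj G) = {w \<in> T. \<exists>g\<in>set G. w \<in> sem T V \<rho> g}"
| "sem T V \<rho> (Mu a) = lfp (\<lambda>X. sem T V (case_nat X \<rho>) a)"
| "sem T V \<rho> (Nu a) = gfp (\<lambda>X. sem T V (case_nat X \<rho>) a)"

definition holds_root :: "'n list set \<Rightarrow> ('n list \<Rightarrow> 'v \<Rightarrow> bool) \<Rightarrow> 'v fm \<Rightarrow> bool" where
  "holds_root T V f \<longleftrightarrow> [] \<in> sem T V (\<lambda>_. {}) f"

section \<open>The calculus K mu omega\<close>

type_synonym 'v seq = "'v fm list \<times> 'v fm list"

text \<open>Rule labels.  Displayed formulas are the first formula of the antecedent and the last
  formula of the succedent; exchange of adjacent positions makes this no restriction.\<close>
datatype rule =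
    Ax | ExL nat | ExR nat | CtrL | CtrR | WkL | WkR
  | AndL nat | OrL | FixL | DiaL | AndR | OrR nat | FixR | BoxR

fun is_logical :: "rule \<Rightarrow> bool" where
  "is_logical Ax = False"
| "is_logical (ExL i) = False"
| "is_logical (ExR i) = False"
| "is_logical CtrL = False"
| "is_logical CtrR = False"
| "is_logical WkL = False"
| "is_logical WkR = False"
| "is_logical r = True"

definition swap_at :: "nat \<Rightarrow> 'a list \<Rightarrow> 'a list" where
  "swap_at i xs = xs[i := xs ! Suc i, Suc i := xs ! i]"

definition is_fix :: "'v fm \<Rightarrow> bool" where
  "is_fix f \<longleftrightarrow> (\<exists>a. f = Mu a \<or> f = Nu a)"

fun rule_inst :: "rule \<Rightarrow> 'v seq \<Rightarrow> 'v seq list \<Rightarrow> bool" where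
  "rule_inst Ax (\<Phi>, \<Psi>) Ss \<longleftrightarrow> Ss = [] \<and>
     (\<exists>x. (\<Phi>, \<Psi>) = ([Var x, NVar x], []) \<or> (\<Phi>, \<Psi>) = ([], [NVar x, Var x])
        \<or> (\<Phi>, \<Psi>) = ([Var x], [Var x]))"
| "rule_inst (ExL i) (\<Phi>, \<Psi>) Ss \<longleftrightarrow> Suc i < length \<Phi> \<and> Ss = [(swap_at i \<Phi>, \<Psi>)]"
| "rule_inst (ExR i) (\<Phi>, \<Psi>) Ss \<longleftrightarrow> Suc i < length \<Psi> \<and> Ss = [(\<Phi>, swap_at i \<Psi>)]"
| "rule_inst CtrL (\<Phi>, \<Psi>) Ss \<longleftrightarrow> (\<exists>a \<Phi>'. \<Phi> = a # \<Phi>' \<and> Ss = [(a # a # \<Phi>', \<Psi>)])"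
| "rule_inst CtrR (\<Phi>, \<Psi>) Ss \<longleftrightarrow> (\<exists>a \<Psi>'. \<Psi> = \<Psi>' @ [a] \<and> Ss = [(\<Phi>, \<Psi>' @ [a, a])])"
| "rule_inst WkL (\<Phi>, \<Psi>) Ss \<longleftrightarrow> (\<exists>a \<Phi>'. \<Phi> = a # \<Phi>' \<and> Ss = [(\<Phi>', \<Psi>)])"
| "rule_inst WkR (\<Phi>, \<Psi>) Ss \<longleftrightarrow> (\<exists>a \<Psi>'. \<Psi> = \<Psi>' @ [a] \<and> Ss = [(\<Phi>, \<Psi>')])"
| "rule_inst (AndL k) (\<Phi>, \<Psi>) Ss \<longleftrightarrow>
     (\<exists>G \<Phi>'. \<Phi> = Conj G # \<Phi>' \<and> k < length G \<and> Ss = [(G ! k # \<Phi>', \<Psi>)])"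
| "rule_inst OrL (\<Phi>, \<Psi>) Ss \<longleftrightarrow>
     (\<exists>G \<Phi>'. \<Phi> = Disj G # \<Phi>' \<and> Ss = map (\<lambda>g. (g # \<Phi>', \<Psi>)) G)"
| "rule_inst FixL (\<Phi>, \<Psi>) Ss \<longleftrightarrow>
     (\<exists>f \<Phi>'. \<Phi> = f # \<Phi>' \<and> is_fix f \<and> Ss = [(unfold f # \<Phi>', \<Psi>)])"
| "rule_inst DiaL (\<Phi>, \<Psi>) Ss \<longleftrightarrow>
     (\<exists>a \<Phi>' \<Psi>'. \<Phi> = Dia a # map Box \<Phi>' \<and> \<Psi> = map Dia \<Psi>' \<and> Ss = [(a # \<Phi>', \<Psi>')])"
| "rule_inst AndR (\<Phi>, \<Psi>) Ss \<longleftrightarrow>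
     (\<exists>G \<Psi>'. \<Psi> = \<Psi>' @ [Conj G] \<and> Ss = map (\<lambda>g. (\<Phi>, \<Psi>' @ [g])) G)"
| "rule_inst (OrR k) (\<Phi>, \<Psi>) Ss \<longleftrightarrow>
     (\<exists>G \<Psi>'. \<Psi> = \<Psi>' @ [Disj G] \<and> k < length G \<and> Ss = [(\<Phi>, \<Psi>' @ [G ! k])])"
| "rule_inst FixR (\<Phi>, \<Psi>) Ss \<longleftrightarrow>
     (\<exists>f \<Psi>'. \<Psi> = \<Psi>' @ [f] \<and> is_fix f \<and> Ss = [(\<Phi>, \<Psi>' @ [unfold f])])"
| "rule_inst BoxR (\<Phi>, \<Psi>) Ss \<longleftrightarrow>
     (\<exists>a \<Phi>' \<Psi>'. \<Phi> = map Box \<Phi>' \<and> \<Psi> = map Dia \<Psi>' @ [Box a] \<and> Ss = [(\<Phi>', \<Psi>' @ [a])])"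

text \<open>Formula occurrences: (True, j) is position j of the antecedent, (False, j) position j of
  the succedent.\<close>
type_synonym occ = "bool \<times> nat"

fun valid_occ :: "'v seq \<Rightarrow> occ \<Rightarrow> bool" where
  "valid_occ (\<Phi>, \<Psi>) (l, j) = (if l then j < length \<Phi> else j < length \<Psi>)"

fun fm_at :: "'v seq \<Rightarrow> occ \<Rightarrow> 'v fm" where
  "fm_at (\<Phi>, \<Psi>) (l, j) = (if l then \<Phi> ! j else \<Psi> ! j)"

text \<open>link r S o oc': occurrence o in the conclusion S of rule r moves (upwards) to occurrence oc'
  in (each) premise.  In the logical rules positions are preserved (principal goes to minor,
  side formulas to their copies).\<close>
fun link :: "rule \<Rightarrow> 'v seq \<Rightarrow> occ \<Rightarrow> occ \<Rightarrow> bool" where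
  "link Ax S oc oc' = False"
| "link (ExL i) S (l, j) oc' =
     (if l then oc' = (True, if j = i then Suc i else if j = Suc i then i else j) else oc' = (False, j))"
| "link (ExR i) S (l, j) oc' =
     (if l then oc' = (True, j) else oc' = (False, if j = i then Suc i else if j = Suc i then i else j))"
| "link CtrL S (l, j) oc' =
     (if l then (if j = 0 then oc' = (True, 0) \<or> oc' = (True, 1) else oc' = (True, Suc j))
      else oc' = (False, j))"
| "link CtrR (\<Phi>, \<Psi>) (l, j) oc' =
     (if l then oc' = (True, j)
      else if j = length \<Psi> - 1 then oc' = (False, j) \<or> oc' = (False, Suc j) else oc' = (False, j))"
| "link WkL S (l, j) oc' = (if l then j \<noteq> 0 \<and> oc' = (True, j - 1) else oc' = (False, j))"
| "link WkR (\<Phi>, \<Psi>) (l, j) oc' = (if l then oc' = (True, j) else j \<noteq> length \<Psi> - 1 \<and> oc' = (False, j))"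
| "link r S oc oc' = (oc' = oc)"

text \<open>Principal occurrences.  In the modal rules all displayed modal formulas of the conclusion
  are treated as principal (so that recorded threads respect the immediate-subformula relation).\<close>
fun principal :: "rule \<Rightarrow> 'v seq \<Rightarrow> occ \<Rightarrow> bool" where
  "principal (AndL k) S oc = (oc = (True, 0))"
| "principal OrL S oc = (oc = (True, 0))"
| "principal FixL S oc = (oc = (True, 0))"
| "principal AndR (\<Phi>, \<Psi>) oc = (oc = (False, length \<Psi> - 1))"
| "principal (OrR k) (\<Phi>, \<Psi>) oc = (oc = (False, length \<Psi> - 1))"
| "principal FixR (\<Phi>, \<Psi>) oc = (oc = (False, length \<Psi> - 1))"
| "principal DiaL S oc = True"
| "principal BoxR S oc = True"
| "principal r S oc = False"

codatatype 'v dtree = Node (lab: "'v seq \<times> rule") (kids: "'v dtree list")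

definition sq :: "'v dtree \<Rightarrow> 'v seq" where "sq t = fst (lab t)"
definition rl :: "'v dtree \<Rightarrow> rule" where "rl t = snd (lab t)"

inductive_set subtrees :: "'v dtree \<Rightarrow> 'v dtree set" for t where
  self: "t \<in> subtrees t"
| kid: "s \<in> subtrees t \<Longrightarrow> u \<in> set (kids s) \<Longrightarrow> u \<in> subtrees t"

text \<open>Every node is a correct rule instance whose premises are exactly its children
  (so every leaf is a premise-free rule instance, i.e. an axiom).\<close>
definition wf_tree :: "'v dtree \<Rightarrow> bool" where
  "wf_tree t \<longleftrightarrow> (\<forall>s \<in> subtrees t. rule_inst (rl s) (sq s) (map sq (kids s)))"

definition is_branch :: "'v dtree \<Rightarrow> (nat \<Rightarrow> 'v dtree) \<Rightarrow> bool" where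
  "is_branch t b \<longleftrightarrow> b 0 = t \<and> (\<forall>n. b (Suc n) \<in> set (kids (b n)))"

definition is_trace :: "(nat \<Rightarrow> 'v dtree) \<Rightarrow> nat \<Rightarrow> (nat \<Rightarrow> occ) \<Rightarrow> bool" where
  "is_trace b k oc \<longleftrightarrow> (\<forall>n. valid_occ (sq (b (k + n))) (oc n) \<and>
       link (rl (b (k + n))) (sq (b (k + n))) (oc n) (oc (Suc n)))"

definition princ_step :: "(nat \<Rightarrow> 'v dtree) \<Rightarrow> nat \<Rightarrow> (nat \<Rightarrow> occ) \<Rightarrow> nat \<Rightarrow> bool" where
  "princ_step b k oc n \<longleftrightarrow> principal (rl (b (k + n))) (sq (b (k + n))) (oc n)"

text \<open>The thread supported by the trace is the sequence of formulas at principal steps; it is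
  infinite iff there are infinitely many principal steps.  inf_forms is the set of formulas
  occurring infinitely often in the thread.\<close>
definition inf_thread :: "(nat \<Rightarrow> 'v dtree) \<Rightarrow> nat \<Rightarrow> (nat \<Rightarrow> occ) \<Rightarrow> bool" where
  "inf_thread b k oc \<longleftrightarrow> (\<exists>\<^sub>\<infinity>n. princ_step b k oc n)"

definition inf_forms :: "(nat \<Rightarrow> 'v dtree) \<Rightarrow> nat \<Rightarrow> (nat \<Rightarrow> occ) \<Rightarrow> 'v fm set" where
  "inf_forms b k oc = {f. \<exists>\<^sub>\<infinity>n. princ_step b k oc n \<and> fm_at (sq (b (k + n))) (oc n) = f}"

definition min_is_mu :: "'v fm set \<Rightarrow> bool" where
  "min_is_mu F \<longleftrightarrow> (\<exists>a. Mu a \<in> F \<and> (\<forall>g\<in>F. g \<noteq> Mu a \<longrightarrow> rk (Mu a) < rk g))"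

definition min_is_nu :: "'v fm set \<Rightarrow> bool" where
  "min_is_nu F \<longleftrightarrow> (\<exists>a. Nu a \<in> F \<and> (\<forall>g\<in>F. g \<noteq> Nu a \<longrightarrow> rk (Nu a) < rk g))"

definition mu_thread :: "(nat \<Rightarrow> 'v dtree) \<Rightarrow> nat \<Rightarrow> (nat \<Rightarrow> occ) \<Rightarrow> bool" where
  "mu_thread b k oc \<longleftrightarrow> inf_thread b k oc \<and> min_is_mu (inf_forms b k oc)"

definition nu_thread :: "(nat \<Rightarrow> 'v dtree) \<Rightarrow> nat \<Rightarrow> (nat \<Rightarrow> occ) \<Rightarrow> bool" where
  "nu_thread b k oc \<longleftrightarrow> inf_thread b k oc \<and> min_is_nu (inf_forms b k oc)"

definition good_branch :: "(nat \<Rightarrow> 'v dtree) \<Rightarrow> bool" where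
  "good_branch b \<longleftrightarrow> (\<exists>k oc. is_trace b k oc \<and>
      ((fst (oc 0) \<and> mu_thread b k oc) \<or> (\<not> fst (oc 0) \<and> nu_thread b k oc)))"

definition coproof :: "'v dtree \<Rightarrow> bool" where
  "coproof t \<longleftrightarrow> wf_tree t \<and>
     (\<forall>b. is_branch t b \<longrightarrow> (\<exists>\<^sub>\<infinity>n. is_logical (rl (b n))) \<and> good_branch b)"

definition has_coproof :: "'v seq \<Rightarrow> bool" where
  "has_coproof S \<longleftrightarrow> (\<exists>t. sq t = S \<and> coproof t)"

end

theory Submission
  imports Defs
begin

text \<open>Soundness is proved by contradiction, in the style of signature arguments. Take a model
  falsifying the root sequent at the root. Walking up the co-proof, each rule instance has a
  premise that is again falsified at some node (a child node for the modal rules), so there is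
  an infinite branch all of whose sequents are falsified. Along it every formula occurrence is
  annotated: a true least fixed point on the left, or a false greatest fixed point on the right,
  is replaced by an ordinal approximant that is still true resp. still false, and later
  unfoldings of an approximant pass to strictly smaller ordinals. The branch carries a
  \<open>\<mu>\<close>-thread on the left or a \<open>\<nu>\<close>-thread on the right; past the point where the proper
  subformulas of its minimal fixed point formula have stopped being principal, each unfolding of
  that formula decreases the ordinal bounding all of its annotated occurrences, contradicting
  well-foundedness.\<close>

section \<open>Ordinal approximants of fixed points\<close>

text \<open>Ordinal notations with limits indexed by \<open>'i\<close>. Taking \<open>'i\<close> to be the powerset of the
  carrier makes the approximants below reach every least and greatest fixed point.\<close>

datatype 'i ordinal = OZero | OSuc "'i ordinal" | OLim "'i \<Rightarrow> 'i ordinal"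

definition ordinal_less :: "('i ordinal \<times> 'i ordinal) set" where
  "ordinal_less = {(\<alpha>, OSuc \<alpha>) | \<alpha>. True} \<union> {(f i, OLim f) | f i. True}"

lemma ordinal_less_iff [simp]:
  "(\<beta>, OZero) \<notin> ordinal_less"
  "(\<beta>, OSuc \<alpha>) \<in> ordinal_less \<longleftrightarrow> \<beta> = \<alpha>"
  "(\<beta>, OLim f) \<in> ordinal_less \<longleftrightarrow> \<beta> \<in> range f"
  unfolding ordinal_less_def by auto

lemma wf_ordinal_less: "wf ordinal_less"
proof (rule wfUNIVI)
  fix P :: "'i ordinal \<Rightarrow> bool" and \<alpha>
  assume "\<forall>\<alpha>. (\<forall>\<beta>. (\<beta>, \<alpha>) \<in> ordinal_less \<longrightarrow> P \<beta>) \<longrightarrow> P \<alpha>"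
  then show "P \<alpha>"
    by (induction \<alpha>) auto
qed

primrec lfp_approx :: "('a set \<Rightarrow> 'a set) \<Rightarrow> 'i ordinal \<Rightarrow> 'a set" where
  "lfp_approx F OZero = {}"
| "lfp_approx F (OSuc \<alpha>) = F (lfp_approx F \<alpha>)"
| "lfp_approx F (OLim f) = (\<Union>i. lfp_approx F (f i))"

primrec gfp_approx :: "'a set \<Rightarrow> ('a set \<Rightarrow> 'a set) \<Rightarrow> 'i ordinal \<Rightarrow> 'a set" where
  "gfp_approx T F OZero = T"
| "gfp_approx T F (OSuc \<alpha>) = F (gfp_approx T F \<alpha>)"
| "gfp_approx T F (OLim f) = T \<inter> (\<Inter>i. gfp_approx T F (f i))"

lemma lfp_approx_descends:
  "w \<in> lfp_approx F \<alpha> \<Longrightarrow> \<exists>\<beta>. (\<beta>, \<alpha>) \<in> ordinal_less\<^sup>+ \<and> w \<in> F (lfp_approx F \<beta>)"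
proof (induction \<alpha>)
  case (OLim f)
  then obtain i where "w \<in> lfp_approx F (f i)" by auto
  with OLim.IH[of "f i"] obtain \<beta> where "(\<beta>, f i) \<in> ordinal_less\<^sup>+" "w \<in> F (lfp_approx F \<beta>)" by auto
  then show ?case by (meson ordinal_less_iff(3) rangeI trancl_into_trancl)
qed (force intro: r_into_trancl')+

lemma gfp_approx_descends:
  "w \<in> T \<Longrightarrow> w \<notin> gfp_approx T F \<alpha> \<Longrightarrow> \<exists>\<beta>. (\<beta>, \<alpha>) \<in> ordinal_less\<^sup>+ \<and> w \<notin> F (gfp_approx T F \<beta>)"
proof (induction \<alpha>)
  case (OLim f)
  then obtain i where "w \<notin> gfp_approx T F (f i)" by auto
  with OLim.IH[of "f i"] OLim.prems obtain \<beta> where "(\<beta>, f i) \<in> ordinal_less\<^sup>+" "w \<notin> F (gfp_approx T F \<beta>)" by auto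
  then show ?case by (meson ordinal_less_iff(3) rangeI trancl_into_trancl)
qed (force intro: r_into_trancl')+

lemma lfp_approx_exhausts:
  fixes F :: "'a set \<Rightarrow> 'a set"
  assumes "mono F" and "w \<in> lfp F"
  shows "\<exists>\<alpha> :: 'a set ordinal. w \<in> F (lfp_approx F \<alpha>)"
proof -
  define U where "U = (\<Union>\<alpha> :: 'a set ordinal. F (lfp_approx F \<alpha>))"
  \<comment> \<open>The limit of all approximants, indexed by themselves, is a prefixed point.\<close>
  define index :: "'a set \<Rightarrow> 'a set ordinal" where "index X = (SOME \<alpha>. lfp_approx F \<alpha> = X)" for X
  have "lfp_approx F (index (lfp_approx F \<alpha>)) = lfp_approx F \<alpha>" for \<alpha> :: "'a set ordinal"
    unfolding index_def by (rule someI) (rule refl)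
  then have "lfp_approx F \<alpha> \<subseteq> lfp_approx F (OLim index)" for \<alpha> :: "'a set ordinal"
    by (metis UN_upper UNIV_I lfp_approx.simps(3))
  then have "U \<subseteq> lfp_approx F (OLim index)"
    unfolding U_def by (metis UN_least lfp_approx.simps(2))
  then have "F U \<subseteq> F (lfp_approx F (OLim index))"
    by (rule monoD[OF assms(1)])
  also have "\<dots> \<subseteq> U"
    unfolding U_def by (rule UN_upper) (rule UNIV_I)
  finally have "lfp F \<subseteq> U" by (rule lfp_lowerbound)
  then show ?thesis using assms(2) unfolding U_def by blast
qed

lemma gfp_approx_exhausts:
  fixes F :: "'a set \<Rightarrow> 'a set"
  assumes "mono F" and "w \<notin> gfp F"
  shows "\<exists>\<alpha> :: 'a set ordinal. w \<notin> F (gfp_approx T F \<alpha>)"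
proof -
  define L where "L = (\<Inter>\<alpha> :: 'a set ordinal. F (gfp_approx T F \<alpha>))"
  define index :: "'a set \<Rightarrow> 'a set ordinal" where "index X = (SOME \<alpha>. gfp_approx T F \<alpha> = X)" for X
  have "gfp_approx T F (index (gfp_approx T F \<alpha>)) = gfp_approx T F \<alpha>" for \<alpha> :: "'a set ordinal"
    unfolding index_def by (rule someI) (rule refl)
  then have "gfp_approx T F (OLim index) \<subseteq> gfp_approx T F \<alpha>" for \<alpha> :: "'a set ordinal"
    by (metis INT_lower UNIV_I gfp_approx.simps(3) le_infI2)
  then have "gfp_approx T F (OLim index) \<subseteq> L"
    unfolding L_def by (metis INT_greatest gfp_approx.simps(2))
  then have "F (gfp_approx T F (OLim index)) \<subseteq> F L"
    by (rule monoD[OF assms(1)])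
  moreover have "L \<subseteq> F (gfp_approx T F (OLim index))"
    unfolding L_def by (rule INT_lower) (rule UNIV_I)
  ultimately have "L \<subseteq> gfp F"
    by (intro gfp_upperbound) (rule order_trans)
  then show ?thesis using assms(2) unfolding L_def by blast
qed

fun fix_sem :: "'a set \<Rightarrow> bool \<Rightarrow> 'a set ordinal option \<Rightarrow> ('a set \<Rightarrow> 'a set) \<Rightarrow> 'a set" where
  "fix_sem T True None F = lfp F"
| "fix_sem T False None F = gfp F"
| "fix_sem T True (Some \<alpha>) F = lfp_approx F \<alpha>"
| "fix_sem T False (Some \<alpha>) F = gfp_approx T F \<alpha>"

lemma fix_sem_subset:
  assumes "\<And>X. F X \<subseteq> T"
  shows "fix_sem T l d F \<subseteq> T"
proof -
  have "lfp_approx F \<alpha> \<subseteq> T" "gfp_approx T F \<alpha> \<subseteq> T" for \<alpha> :: "'a set ordinal"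
    using assms by (induction \<alpha>) auto
  moreover have "lfp F \<subseteq> T"
    by (rule lfp_lowerbound) (rule assms)
  moreover have "gfp F \<subseteq> T"
    by (rule gfp_least) (use assms in blast)
  ultimately show ?thesis by (cases l; cases d) auto
qed

lemma fix_sem_mono:
  assumes "\<And>X. F X \<subseteq> G X" and "mono G"
  shows "fix_sem T l d F \<subseteq> fix_sem T l d G"
proof -
  have "lfp_approx F \<alpha> \<subseteq> lfp_approx G \<alpha>" for \<alpha> :: "'a set ordinal"
  proof (induction \<alpha>)
    case (OSuc \<alpha>)
    then show ?case using assms by (metis lfp_approx.simps(2) monoD order_trans)
  qed auto
  moreover have "gfp_approx T F \<alpha> \<subseteq> gfp_approx T G \<alpha>" for \<alpha> :: "'a set ordinal"
  proof (induction \<alpha>)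
    case (OSuc \<alpha>)
    then show ?case using assms by (metis gfp_approx.simps(2) monoD order_trans)
  qed auto
  moreover have "lfp F \<subseteq> lfp G" "gfp F \<subseteq> gfp G"
    by (rule lfp_mono gfp_mono, rule assms(1))+
  ultimately show ?thesis by (cases l; cases d) auto
qed

lemma fix_sem_unfold: "mono F \<Longrightarrow> F (fix_sem T l None F) = fix_sem T l None F"
  by (cases l) (simp_all add: lfp_fixpoint gfp_fixpoint)

lemma fix_sem_exhausts:
  assumes "mono F" and "(w \<in> fix_sem T l None F) = l"
  shows "\<exists>\<alpha>. (w \<in> F (fix_sem T l (Some \<alpha>) F)) = l"
  using assms lfp_approx_exhausts[of F w] gfp_approx_exhausts[of F w T] by (cases l) auto

lemma fix_sem_descends:
  assumes "w \<in> T" and "(w \<in> fix_sem T l (Some \<alpha>) F) = l"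
  shows "\<exists>\<beta>. (\<beta>, \<alpha>) \<in> ordinal_less\<^sup>+ \<and> (w \<in> F (fix_sem T l (Some \<beta>) F)) = l"
  using assms lfp_approx_descends[of w F \<alpha>] gfp_approx_descends[of w T F \<alpha>] by (cases l) auto

section \<open>Annotated formulas\<close>

text \<open>\<open>AFix True None a\<close> and \<open>AFix False None a\<close> stand for \<open>Mu a\<close> and \<open>Nu a\<close>;
  \<open>AFix l (Some \<alpha>) a\<close> stands for their \<open>\<alpha>\<close>-th approximant.\<close>

datatype ('v, 'i) afm =
    AVar 'v
  | ANVar 'v
  | ABVar nat
  | ABox "('v, 'i) afm"
  | ADia "('v, 'i) afm"
  | AConj "('v, 'i) afm list"
  | ADisj "('v, 'i) afm list"
  | AFix bool "'i ordinal option" "('v, 'i) afm"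

fun fix_fm :: "bool \<Rightarrow> 'v fm \<Rightarrow> 'v fm" where
  "fix_fm True a = Mu a"
| "fix_fm False a = Nu a"

lemma fix_fm_eq_iff [simp]: "fix_fm l a = fix_fm l' b \<longleftrightarrow> l = l' \<and> a = b"
  by (cases l; cases l') auto

lemma fix_fm_neq [simp]:
  "fix_fm l a \<noteq> Var x" "fix_fm l a \<noteq> NVar x" "fix_fm l a \<noteq> Box b" "fix_fm l a \<noteq> Dia b"
  "fix_fm l a \<noteq> Conj G" "fix_fm l a \<noteq> Disj G"
  "Var x \<noteq> fix_fm l a" "NVar x \<noteq> fix_fm l a" "Box b \<noteq> fix_fm l a" "Dia b \<noteq> fix_fm l a"
  "Conj G \<noteq> fix_fm l a" "Disj G \<noteq> fix_fm l a"
  by (cases l; simp)+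

lemma size_fix_fm [simp]: "size (fix_fm l a) = Suc (size a)"
  by (cases l) auto

lemma lc_fix_fm [simp]: "lc d (fix_fm l a) = lc (Suc d) a"
  by (cases l) auto

lemma subst_fix_fm [simp]: "subst k b (fix_fm l a) = fix_fm l (subst (Suc k) b a)"
  by (cases l) auto

lemma unfold_fix_fm [simp]: "unfold (fix_fm l a) = subst 0 (fix_fm l a) a"
  by (cases l) auto

fun erase :: "('v, 'i) afm \<Rightarrow> 'v fm" where
  "erase (AVar x) = Var x"
| "erase (ANVar x) = NVar x"
| "erase (ABVar k) = BVar k"
| "erase (ABox a) = Box (erase a)"
| "erase (ADia a) = Dia (erase a)"
| "erase (AConj G) = Conj (map erase G)"
| "erase (ADisj G) = Disj (map erase G)"
| "erase (AFix l d a) = fix_fm l (erase a)"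

fun embed :: "'v fm \<Rightarrow> ('v, 'i) afm" where
  "embed (Var x) = AVar x"
| "embed (NVar x) = ANVar x"
| "embed (BVar k) = ABVar k"
| "embed (Box a) = ABox (embed a)"
| "embed (Dia a) = ADia (embed a)"
| "embed (Conj G) = AConj (map embed G)"
| "embed (Disj G) = ADisj (map embed G)"
| "embed (Mu a) = AFix True None (embed a)"
| "embed (Nu a) = AFix False None (embed a)"

fun asubst :: "nat \<Rightarrow> ('v, 'i) afm \<Rightarrow> ('v, 'i) afm \<Rightarrow> ('v, 'i) afm" where
  "asubst k P (ABVar j) = (if j = k then P else ABVar j)"
| "asubst k P (ABox a) = ABox (asubst k P a)"
| "asubst k P (ADia a) = ADia (asubst k P a)"
| "asubst k P (AConj G) = AConj (map (asubst k P) G)"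
| "asubst k P (ADisj G) = ADisj (map (asubst k P) G)"
| "asubst k P (AFix l d a) = AFix l d (asubst (Suc k) P a)"
| "asubst k P a = a"

fun asub :: "('v, 'i) afm \<Rightarrow> ('v, 'i) afm set" where
  "asub (ABox a) = insert (ABox a) (asub a)"
| "asub (ADia a) = insert (ADia a) (asub a)"
| "asub (AConj G) = insert (AConj G) (\<Union>g\<in>set G. asub g)"
| "asub (ADisj G) = insert (ADisj G) (\<Union>g\<in>set G. asub g)"
| "asub (AFix l d a) = insert (AFix l d a) (asub a)"
| "asub a = {a}"

fun sub :: "'v fm \<Rightarrow> 'v fm set" where
  "sub (Box a) = insert (Box a) (sub a)"
| "sub (Dia a) = insert (Dia a) (sub a)"
| "sub (Conj G) = insert (Conj G) (\<Union>g\<in>set G. sub g)"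
| "sub (Disj G) = insert (Disj G) (\<Union>g\<in>set G. sub g)"
| "sub (Mu a) = insert (Mu a) (sub a)"
| "sub (Nu a) = insert (Nu a) (sub a)"
| "sub a = {a}"

lemma erase_embed [simp]: "erase (embed f) = f"
  by (induction f) (auto simp: map_idI)

lemma erase_asubst: "erase (asubst k P a) = subst k (erase P) (erase a)"
  by (induction a arbitrary: k) auto

lemma asub_self [simp]: "a \<in> asub a"
  by (cases a) auto

lemma sub_self [simp]: "f \<in> sub f"
  by (cases f) auto

lemma sub_fix_fm [simp]: "sub (fix_fm l a) = insert (fix_fm l a) (sub a)"
  by (cases l) auto

lemma finite_sub: "finite (sub f)"
  by (induction f) auto

lemma erase_asub: "h \<in> asub a \<Longrightarrow> erase h \<in> sub (erase a)"
  by (induction a arbitrary: h) auto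

lemma size_asub: "h \<in> asub a \<Longrightarrow> size h \<le> size a"
proof (induction a arbitrary: h)
  case (AConj G)
  then show ?case by (auto, meson le_SucI le_trans size_list_estimation')
next
  case (ADisj G)
  then show ?case by (auto, meson le_SucI le_trans size_list_estimation')
qed (auto, (meson le_SucI le_trans le_add2)+)

lemma less_Suc_size_list: "x \<in> set xs \<Longrightarrow> f x < Suc (size_list f xs)"
  by (simp add: le_imp_less_Suc size_list_estimation')

lemma size_erase_asub: "h \<in> asub a \<Longrightarrow> h = a \<or> size (erase h) < size (erase a)"
proof (induction a arbitrary: h)
  case (AConj G)
  then show ?case
    using less_Suc_size_list[of "erase g" "map erase G" size for g] by (auto intro: less_trans)
next
  case (ADisj G)
  then show ?case
    using less_Suc_size_list[of "erase g" "map erase G" size for g] by (auto intro: less_trans)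
qed (auto simp: less_Suc_eq)

lemma asubst_changed: "asubst k P a \<noteq> a \<Longrightarrow> P \<in> asub (asubst k P a)"
proof (induction a arbitrary: k)
  case (AConj G)
  then have "map (asubst k P) G \<noteq> G" by simp
  then obtain g where g: "g \<in> set G" "asubst k P g \<noteq> g"
    by (meson map_idI)
  then have "P \<in> asub (asubst k P g)" using AConj.IH by blast
  then show ?case using g(1) by auto
next
  case (ADisj G)
  then have "map (asubst k P) G \<noteq> G" by simp
  then obtain g where g: "g \<in> set G" "asubst k P g \<noteq> g"
    by (meson map_idI)
  then have "P \<in> asub (asubst k P g)" using ADisj.IH by blast
  then show ?case using g(1) by auto
qed (auto split: if_splits)

lemma asubst_root:
  "asubst k P a = a \<or> asubst k P a = P \<or> (P \<in> asub (asubst k P a) \<and> P \<noteq> asubst k P a)"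
proof (cases a)
  case (ABox c)
  then show ?thesis
    using asubst_changed[of k P c] size_asub[of P "asubst k P c"] by auto
next
  case (ADia c)
  then show ?thesis
    using asubst_changed[of k P c] size_asub[of P "asubst k P c"] by auto
next
  case (AFix l d c)
  then show ?thesis
    using asubst_changed[of "Suc k" P c] size_asub[of P "asubst (Suc k) P c"] by auto
next
  case (AConj G)
  show ?thesis
  proof (cases "map (asubst k P) G = G")
    case False
    then obtain g where "g \<in> set G" "asubst k P g \<noteq> g" by (meson map_idI)
    then show ?thesis
      using AConj asubst_changed[of k P g] size_asub[of P "asubst k P g"]
        less_Suc_size_list[of "asubst k P g" "map (asubst k P) G" size] by force
  qed (use AConj in simp)
next
  case (ADisj G)
  show ?thesis
  proof (cases "map (asubst k P) G = G")
    case False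
    then obtain g where "g \<in> set G" "asubst k P g \<noteq> g" by (meson map_idI)
    then show ?thesis
      using ADisj asubst_changed[of k P g] size_asub[of P "asubst k P g"]
        less_Suc_size_list[of "asubst k P g" "map (asubst k P) G" size] by force
  qed (use ADisj in simp)
qed auto

lemma asub_asubst:
  "h \<in> asub (asubst k P a) \<Longrightarrow> h \<in> asub P \<or> h \<in> asub a \<or> (P \<in> asub h \<and> P \<noteq> h)"
proof (induction a arbitrary: k h)
  case (AConj G)
  then show ?case using asubst_root[of k P "AConj G"] by auto
next
  case (ADisj G)
  then show ?case using asubst_root[of k P "ADisj G"] by auto
next
  case (ABox c)
  then show ?case using asubst_root[of k P "ABox c"] by auto
next
  case (ADia c)
  then show ?case using asubst_root[of k P "ADia c"] by auto
next
  case (AFix l d c)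
  then show ?case using asubst_root[of k P "AFix l d c"] by auto
qed (auto split: if_splits)

fun asem :: "'n list set \<Rightarrow> ('n list \<Rightarrow> 'v \<Rightarrow> bool) \<Rightarrow> (nat \<Rightarrow> 'n list set) \<Rightarrow>
    ('v, 'n list set) afm \<Rightarrow> 'n list set" where
  "asem T V \<rho> (AVar x) = {w \<in> T. V w x}"
| "asem T V \<rho> (ANVar x) = {w \<in> T. \<not> V w x}"
| "asem T V \<rho> (ABVar k) = \<rho> k \<inter> T"
| "asem T V \<rho> (ABox a) = {w \<in> T. \<forall>c. w @ [c] \<in> T \<longrightarrow> w @ [c] \<in> asem T V \<rho> a}"
| "asem T V \<rho> (ADia a) = {w \<in> T. \<exists>c. w @ [c] \<in> T \<and> w @ [c] \<in> asem T V \<rho> a}"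
| "asem T V \<rho> (AConj G) = {w \<in> T. \<forall>g\<in>set G. w \<in> asem T V \<rho> g}"
| "asem T V \<rho> (ADisj G) = {w \<in> T. \<exists>g\<in>set G. w \<in> asem T V \<rho> g}"
| "asem T V \<rho> (AFix l d a) = fix_sem T l d (\<lambda>X. asem T V (case_nat X \<rho>) a)"

lemma asem_subset: "asem T V \<rho> a \<subseteq> T"
proof (induction a arbitrary: \<rho>)
  case (AFix l d a)
  show ?case unfolding asem.simps by (rule fix_sem_subset) (rule AFix.IH)
qed auto

lemma case_nat_subset:
  "X \<subseteq> Y \<Longrightarrow> (\<And>k. \<rho> k \<subseteq> \<rho>' k) \<Longrightarrow> case_nat X \<rho> k \<subseteq> case_nat Y \<rho>' k"
  by (cases k) auto

lemma asem_mono: "(\<And>k. \<rho> k \<subseteq> \<rho>' k) \<Longrightarrow> asem T V \<rho> a \<subseteq> asem T V \<rho>' a"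
proof (induction a arbitrary: \<rho> \<rho>')
  case (ABox a)
  have "asem T V \<rho> a \<subseteq> asem T V \<rho>' a" by (rule ABox.IH) (rule ABox.prems)
  then show ?case by auto
next
  case (ADia a)
  have "asem T V \<rho> a \<subseteq> asem T V \<rho>' a" by (rule ADia.IH) (rule ADia.prems)
  then show ?case by auto
next
  case (AConj G)
  have "\<forall>g\<in>set G. asem T V \<rho> g \<subseteq> asem T V \<rho>' g" using AConj.IH AConj.prems by blast
  then show ?case by auto
next
  case (ADisj G)
  have "\<forall>g\<in>set G. asem T V \<rho> g \<subseteq> asem T V \<rho>' g" using ADisj.IH ADisj.prems by blast
  then show ?case by auto
next
  case (AFix l d a)
  have "asem T V (case_nat X \<rho>) a \<subseteq> asem T V (case_nat X \<rho>') a" for X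
    by (rule AFix.IH) (rule case_nat_subset[OF order_refl AFix.prems])
  moreover have "mono (\<lambda>X. asem T V (case_nat X \<rho>') a)"
    by (rule monoI) (rule AFix.IH, rule case_nat_subset, auto)
  ultimately show ?case by (simp add: fix_sem_mono)
qed auto

lemma mono_asem_body: "mono (\<lambda>X. asem T V (case_nat X \<rho>) a)"
  by (rule monoI) (rule asem_mono, rule case_nat_subset, auto)

lemma asem_cong:
  "lc d (erase a) \<Longrightarrow> (\<And>j. j < d \<Longrightarrow> \<rho> j = \<rho>' j) \<Longrightarrow> asem T V \<rho> a = asem T V \<rho>' a"
proof (induction a arbitrary: d \<rho> \<rho>')
  case (AConj G)
  have "asem T V \<rho> g = asem T V \<rho>' g" if "g \<in> set G" for g
    by (rule AConj.IH[OF that]) (use AConj.prems that in auto)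
  then show ?case by simp
next
  case (ADisj G)
  have "asem T V \<rho> g = asem T V \<rho>' g" if "g \<in> set G" for g
    by (rule ADisj.IH[OF that]) (use ADisj.prems that in auto)
  then show ?case by simp
next
  case (AFix l e a)
  have "asem T V (case_nat X \<rho>) a = asem T V (case_nat X \<rho>') a" for X
    by (rule AFix.IH[of "Suc d"]) (use AFix.prems in \<open>auto split: nat.split\<close>)
  then show ?case by simp
next
  case (ABox a)
  have "asem T V \<rho> a = asem T V \<rho>' a" by (rule ABox.IH) (use ABox.prems in auto)
  then show ?case by simp
next
  case (ADia a)
  have "asem T V \<rho> a = asem T V \<rho>' a" by (rule ADia.IH) (use ADia.prems in auto)
  then show ?case by simp
qed auto

lemma asem_asubst:
  assumes "lc 0 (erase P)"
  shows "asem T V \<rho> (asubst k P a) = asem T V (\<rho>(k := asem T V \<rho> P)) a"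
proof (induction a arbitrary: k \<rho>)
  case (ABVar j)
  then show ?case using asem_subset[of T V \<rho> P] by auto
next
  case (AFix l d a)
  have env: "(case_nat X \<rho>)(Suc k := asem T V (case_nat X \<rho>) P) = case_nat X (\<rho>(k := asem T V \<rho> P))"
    for X
    using asem_cong[OF assms, of "case_nat X \<rho>" \<rho>] by (intro ext) (simp split: nat.split)
  show ?case unfolding asubst.simps asem.simps AFix.IH env by (rule refl)
qed auto

abbreviation asem0 :: "'n list set \<Rightarrow> ('n list \<Rightarrow> 'v \<Rightarrow> bool) \<Rightarrow> ('v, 'n list set) afm \<Rightarrow> 'n list set" where
  "asem0 T V a \<equiv> asem T V (\<lambda>_. {}) a"

lemma asem0_asubst_0:
  assumes "lc 0 (erase P)"
  shows "asem0 T V (asubst 0 P a) = asem T V (case_nat (asem0 T V P) (\<lambda>_. {})) a"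
proof -
  have env: "(\<lambda>_. {})(0 := asem0 T V P) = case_nat (asem0 T V P) (\<lambda>_. {})"
    by (rule ext) (simp split: nat.split)
  show ?thesis unfolding asem_asubst[OF assms] env by (rule refl)
qed

lemma asem_embed: "asem T V \<rho> (embed f) = sem T V \<rho> f"
  by (induction f arbitrary: \<rho>) auto

fun polarised :: "bool \<Rightarrow> ('v, 'i) afm \<Rightarrow> bool" where
  "polarised l (ABox a) = polarised l a"
| "polarised l (ADia a) = polarised l a"
| "polarised l (AConj G) = (\<forall>g\<in>set G. polarised l g)"
| "polarised l (ADisj G) = (\<forall>g\<in>set G. polarised l g)"
| "polarised l (AFix l' d a) = ((d = None \<or> l' = l) \<and> polarised l a)"
| "polarised l a = True"

lemma polarised_asubst: "polarised l P \<Longrightarrow> polarised l a \<Longrightarrow> polarised l (asubst k P a)"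
  by (induction a arbitrary: k) auto

lemma polarised_embed: "polarised l (embed f)"
  by (induction f) auto

lemma lc_mono: "lc d a \<Longrightarrow> d \<le> e \<Longrightarrow> lc e a"
  by (induction a arbitrary: d e) auto

lemma lc_subst: "lc (Suc d) a \<Longrightarrow> lc d b \<Longrightarrow> lc d (subst d b a)"
proof (induction a arbitrary: d)
  case (Mu a)
  then show ?case using lc_mono[of d b "Suc d"] by simp
next
  case (Nu a)
  then show ?case using lc_mono[of d b "Suc d"] by simp
qed auto

lemma lc_unfold: "lc 0 f \<Longrightarrow> lc 0 (unfold f)"
  by (cases f) (auto intro: lc_subst)

text \<open>The side \<open>l\<close> is \<open>True\<close> for antecedent and \<open>False\<close> for succedent occurrences: an
  antecedent formula must be true at \<open>w\<close> and carry only least fixed point approximants, a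
  succedent formula must be false at \<open>w\<close> and carry only greatest fixed point approximants.\<close>

definition fits :: "'n list set \<Rightarrow> ('n list \<Rightarrow> 'v \<Rightarrow> bool) \<Rightarrow> bool \<Rightarrow> 'n list \<Rightarrow> ('v, 'n list set) afm \<Rightarrow> bool" where
  "fits T V l w a \<longleftrightarrow> (w \<in> asem0 T V a) = l \<and> lc 0 (erase a) \<and> polarised l a"

section \<open>Annotated threads\<close>

inductive thread_step :: "bool \<Rightarrow> ('v, 'i) afm \<Rightarrow> ('v, 'i) afm \<Rightarrow> bool" for l where
  conj: "g \<in> set G \<Longrightarrow> thread_step l (AConj G) g"
| disj: "g \<in> set G \<Longrightarrow> thread_step l (ADisj G) g"
| box: "thread_step l (ABox a) a"
| dia: "thread_step l (ADia a) a"
| unfold_dual: "thread_step l (AFix (\<not> l) None a) (asubst 0 (AFix (\<not> l) None a) a)"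
| unfold_approx: "thread_step l (AFix l None a) (asubst 0 (AFix l (Some \<alpha>) a) a)"
| unfold_descend:
    "(\<beta>, \<alpha>) \<in> ordinal_less\<^sup>+ \<Longrightarrow> thread_step l (AFix l (Some \<alpha>) a) (asubst 0 (AFix l (Some \<beta>) a) a)"

lemma fits_unfold:
  assumes "w \<in> T" and "fits T V l w g" and "is_fix (erase g)"
  obtains g' where "erase g' = unfold (erase g)" and "fits T V l w g'" and "thread_step l g g'"
proof -
  obtain l' d c where g: "g = AFix l' d c"
    using assms(3) by (cases g) (auto simp: is_fix_def)
  have lc: "lc 0 (erase g')" if "erase g' = unfold (erase g)" for g'
    using that lc_unfold assms(2) unfolding fits_def by metis
  define F where "F = (\<lambda>X. asem T V (case_nat X (\<lambda>_. {})) c)"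
  have mono: "mono F"
    unfolding F_def by (rule mono_asem_body)
  have unfolded: "asem0 T V (asubst 0 (AFix l' e c) c) = F (fix_sem T l' e F)" for e
    using assms(2) g by (simp add: asem0_asubst_0 F_def fits_def)
  have erased: "erase (asubst 0 (AFix l' e c) c) = unfold (erase g)" for e
    using g by (simp add: erase_asubst)
  have fits: "fits T V l w (asubst 0 (AFix l' e c) c)"
    if "e = None \<or> l' = l" and "(w \<in> F (fix_sem T l' e F)) = l" for e
    using assms(2) g that unfolded lc[OF erased] by (auto simp: fits_def intro: polarised_asubst)
  have sem: "(w \<in> fix_sem T l' d F) = l"
    using assms(2) g by (simp add: F_def fits_def)
  consider (dual) "l' = (\<not> l)" "d = None" | (plain) "l' = l" "d = None"
    | (approx) \<alpha> where "l' = l" "d = Some \<alpha>"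
    using assms(2) g unfolding fits_def by (cases d) auto
  then show thesis
  proof cases
    case dual
    then show thesis
      using that[of "asubst 0 g c"] erased fits[of None] fix_sem_unfold[OF mono] sem
        thread_step.unfold_dual[of l c] g by simp
  next
    case plain
    then obtain \<alpha> where "(w \<in> F (fix_sem T l (Some \<alpha>) F)) = l"
      using fix_sem_exhausts[OF mono] sem by blast
    then show thesis
      using that[of "asubst 0 (AFix l (Some \<alpha>) c) c"] erased fits
        thread_step.unfold_approx[of l c \<alpha>] plain g by simp
  next
    case (approx \<alpha>)
    then obtain \<beta> where "(\<beta>, \<alpha>) \<in> ordinal_less\<^sup>+" "(w \<in> F (fix_sem T l (Some \<beta>) F)) = l"
      using fix_sem_descends[OF assms(1)] sem by blast
    then show thesis
      using that[of "asubst 0 (AFix l (Some \<beta>) c) c"] erased fits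
        thread_step.unfold_descend[of \<beta> \<alpha> l c] approx g by simp
  qed
qed

definition approx_bounded :: "bool \<Rightarrow> 'v fm \<Rightarrow> 'i ordinal \<Rightarrow> ('v, 'i) afm \<Rightarrow> bool" where
  "approx_bounded l M \<alpha> a \<longleftrightarrow>
     (\<forall>h\<in>asub a. erase h = M \<longrightarrow> (\<exists>\<beta> c. h = AFix l (Some \<beta>) c \<and> (\<beta>, \<alpha>) \<in> ordinal_less\<^sup>*))"

lemma approx_bounded_unfolding:
  assumes "M = fix_fm l (erase c)"
  shows "approx_bounded l M \<beta> (asubst 0 (AFix l (Some \<beta>) c) c)"
  unfolding approx_bounded_def
proof (intro ballI impI)
  fix h assume h: "h \<in> asub (asubst 0 (AFix l (Some \<beta>) c) c)" and eh: "erase h = M"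
  have small: "size (erase h) < size M" if "h \<in> asub c"
    using size_erase_asub[OF that] assms by auto
  from asub_asubst[OF h] show "\<exists>\<beta>' c'. h = AFix l (Some \<beta>') c' \<and> (\<beta>', \<beta>) \<in> ordinal_less\<^sup>*"
  proof (elim disjE conjE)
    assume "h \<in> asub (AFix l (Some \<beta>) c)"
    then show ?thesis using small eh by auto
  next
    assume "h \<in> asub c"
    then show ?thesis using small eh by simp
  next
    assume "AFix l (Some \<beta>) c \<in> asub h" "AFix l (Some \<beta>) c \<noteq> h"
    then have "size (erase (AFix l (Some \<beta>) c)) < size (erase h)"
      using size_erase_asub by blast
    then show ?thesis using eh assms by simp
  qed
qed

lemma approx_bounded_asubst:
  assumes "approx_bounded l M \<alpha> x" and "erase x \<notin> sub M" and "erase P = erase x"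
    and "asub P \<subseteq> insert P (asub x)" and "asub c \<subseteq> asub x"
  shows "approx_bounded l M \<alpha> (asubst 0 P c)"
  unfolding approx_bounded_def
proof (intro ballI impI)
  fix h assume h: "h \<in> asub (asubst 0 P c)" and eh: "erase h = M"
  from asub_asubst[OF h] consider "h = P" | "h \<in> asub x" | "P \<in> asub h"
    using assms(4,5) by blast
  then show "\<exists>\<beta> c. h = AFix l (Some \<beta>) c \<and> (\<beta>, \<alpha>) \<in> ordinal_less\<^sup>*"
  proof cases
    case 1
    then show ?thesis using assms(2,3) eh by auto
  next
    case 2
    then show ?thesis using assms(1) eh unfolding approx_bounded_def by blast
  next
    case 3
    then show ?thesis using erase_asub[OF 3] assms(2,3) eh by simp
  qed
qed

lemma approx_bounded_step:
  assumes "thread_step l x y" and "erase x \<notin> sub M" and "approx_bounded l M \<alpha> x"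
  shows "approx_bounded l M \<alpha> y"
  using assms(1)
proof cases
  case (unfold_dual c)
  show ?thesis
    unfolding unfold_dual(2) by (rule approx_bounded_asubst[OF assms(3,2)]) (use unfold_dual in auto)
next
  case (unfold_approx c \<beta>)
  show ?thesis
    unfolding unfold_approx(2) by (rule approx_bounded_asubst[OF assms(3,2)]) (use unfold_approx in auto)
next
  case (unfold_descend \<beta> \<gamma> c)
  show ?thesis
    unfolding unfold_descend(2) by (rule approx_bounded_asubst[OF assms(3,2)]) (use unfold_descend in auto)
qed (use assms(3) in \<open>auto simp: approx_bounded_def\<close>)

lemma approx_bounded_unfold_step:
  assumes "thread_step l x y" and "erase x = fix_fm l a"
  obtains \<beta> where "approx_bounded l (fix_fm l a) \<beta> y"
    and "\<And>\<alpha>. approx_bounded l (fix_fm l a) \<alpha> x \<Longrightarrow> (\<beta>, \<alpha>) \<in> ordinal_less\<^sup>+"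
  using assms(1)
proof cases
  case (unfold_approx c \<beta>)
  moreover have "\<not> approx_bounded l (fix_fm l a) \<alpha> x" for \<alpha>
    using unfold_approx assms(2) unfolding approx_bounded_def by auto
  ultimately show thesis
    using that approx_bounded_unfolding[of "fix_fm l a" l c \<beta>] assms(2) by auto
next
  case (unfold_descend \<beta> \<gamma> c)
  moreover have "(\<beta>, \<alpha>) \<in> ordinal_less\<^sup>+" if "approx_bounded l (fix_fm l a) \<alpha> x" for \<alpha>
    using that unfold_descend assms(2) unfolding approx_bounded_def
    by (auto intro: trancl_rtrancl_trancl)
  ultimately show thesis
    using that approx_bounded_unfolding[of "fix_fm l a" l c \<beta>] assms(2) by auto
qed (use assms(2) in auto)

lemma rk_elem_le: "g \<in> set G \<Longrightarrow> rk g \<le> fold max (map rk G) 0"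
  using Max.set_eq_fold[of 0 "map rk G"] by (metis List.finite_set Max_ge list.set_intros(2) list.set_map imageI)

lemma rk_sub: "f \<in> sub g \<Longrightarrow> rk f \<le> rk g"
proof (induction g arbitrary: f)
  case (Conj G)
  show ?case
  proof (cases "f = Conj G")
    case False
    then obtain g where g: "g \<in> set G" "f \<in> sub g" using Conj.prems by auto
    have "rk f \<le> rk g" by (rule Conj.IH[OF g])
    also have "\<dots> \<le> fold max (map rk G) 0" by (rule rk_elem_le[OF g(1)])
    finally show ?thesis by simp
  qed simp
next
  case (Disj G)
  show ?case
  proof (cases "f = Disj G")
    case False
    then obtain g where g: "g \<in> set G" "f \<in> sub g" using Disj.prems by auto
    have "rk f \<le> rk g" by (rule Disj.IH[OF g])
    also have "\<dots> \<le> fold max (map rk G) 0" by (rule rk_elem_le[OF g(1)])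
    finally show ?thesis by simp
  qed simp
qed (auto intro: le_SucI)

lemma approx_bounded_persists:
  assumes steps: "\<And>j. P j \<Longrightarrow> thread_step l (g j) (g (Suc j))"
    and still: "\<And>j. \<not> P j \<Longrightarrow> g (Suc j) = g j"
    and outside: "\<And>j. n \<le> j \<Longrightarrow> j < m \<Longrightarrow> P j \<Longrightarrow> erase (g j) \<notin> sub M"
    and "approx_bounded l M \<alpha> (g n)" and "n \<le> m"
  shows "approx_bounded l M \<alpha> (g m)"
  using assms(5)
proof (induction rule: dec_induct)
  case base
  then show ?case by (rule assms(4))
next
  case (step j)
  show ?case
  proof (cases "P j")
    case True
    show ?thesis
      by (rule approx_bounded_step[OF steps[OF True] outside[OF step.hyps True] step.IH])
  qed (use still step.IH in simp)
qed

lemma approx_bounded_expires: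
  fixes g :: "nat \<Rightarrow> ('v, 'i) afm"
  assumes steps: "\<And>n. P n \<Longrightarrow> thread_step l (g n) (g (Suc n))"
    and still: "\<And>n. \<not> P n \<Longrightarrow> g (Suc n) = g n"
    and proper: "\<And>n. N \<le> n \<Longrightarrow> P n \<Longrightarrow> erase (g n) \<in> sub M \<Longrightarrow> erase (g n) = M"
    and next_M: "\<And>n. \<exists>m. n \<le> m \<and> P m \<and> erase (g m) = M"
    and M: "M = fix_fm l a" and "N \<le> n"
  shows "\<not> approx_bounded l M \<alpha> (g n)"
  using \<open>N \<le> n\<close>
proof (induction \<alpha> arbitrary: n rule: wf_induct_rule[OF wf_trancl[OF wf_ordinal_less]])
  case (1 \<alpha>)
  \<comment> \<open>The bound persists up to the next unfolding of \<open>M\<close>, which lowers it.\<close>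
  define m where "m = (LEAST m. n \<le> m \<and> P m \<and> erase (g m) = M)"
  have m: "n \<le> m" "P m" "erase (g m) = M"
    using LeastI_ex[OF next_M[of n]] unfolding m_def by auto
  have outside: "erase (g j) \<notin> sub M" if "n \<le> j" "j < m" "P j" for j
    using not_less_Least[of j "\<lambda>m. n \<le> m \<and> P m \<and> erase (g m) = M"] proper[of j] that 1(2)
    unfolding m_def by auto
  show ?case
  proof
    assume "approx_bounded l M \<alpha> (g n)"
    then have "approx_bounded l M \<alpha> (g m)"
      using approx_bounded_persists[where P = P and g = g and M = M, OF steps still outside] m(1)
      by blast
    moreover obtain \<beta> where "approx_bounded l M \<beta> (g (Suc m))"
      and "approx_bounded l M \<alpha> (g m) \<Longrightarrow> (\<beta>, \<alpha>) \<in> ordinal_less\<^sup>+"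
      using approx_bounded_unfold_step[OF steps[OF m(2)] m(3)[unfolded M]] unfolding M by blast
    moreover have "N \<le> Suc m" using 1(2) m(1) by simp
    ultimately show False using 1(1) by blast
  qed
qed

lemma annotated_thread_absurd:
  fixes g :: "nat \<Rightarrow> ('v, 'i) afm"
  assumes steps: "\<And>n. P n \<Longrightarrow> thread_step l (g n) (g (Suc n))"
    and still: "\<And>n. \<not> P n \<Longrightarrow> g (Suc n) = g n"
    and often: "\<exists>\<^sub>\<infinity>n. P n \<and> erase (g n) = fix_fm l a"
    and minimal: "\<And>f. f \<noteq> fix_fm l a \<Longrightarrow> \<exists>\<^sub>\<infinity>n. P n \<and> erase (g n) = f \<Longrightarrow> rk (fix_fm l a) < rk f"
  shows False
proof -
  define M where "M = fix_fm l a"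
  have "\<not> (\<exists>\<^sub>\<infinity>n. P n \<and> erase (g n) = f)" if "f \<in> sub M - {M}" for f
  proof
    assume "\<exists>\<^sub>\<infinity>n. P n \<and> erase (g n) = f"
    then have "rk M < rk f" using minimal[of f] that unfolding M_def by blast
    moreover have "rk f \<le> rk M" using rk_sub that by blast
    ultimately show False by simp
  qed
  then have "\<not> (\<exists>\<^sub>\<infinity>n. \<exists>f\<in>sub M - {M}. P n \<and> erase (g n) = f)"
    using INFM_finite_Bex_distrib[of "sub M - {M}" "\<lambda>f n. P n \<and> erase (g n) = f"] finite_sub
    by blast
  then obtain N where N: "\<And>n. N \<le> n \<Longrightarrow> P n \<Longrightarrow> erase (g n) \<in> sub M \<Longrightarrow> erase (g n) = M"
    unfolding not_INFM MOST_nat_le by blast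
  have next_M: "\<exists>m. n \<le> m \<and> P m \<and> erase (g m) = M" for n
    using often unfolding INFM_nat_le M_def by blast
  then obtain m where m: "N \<le> m" "P m" "erase (g m) = M"
    by blast
  obtain \<beta> where "approx_bounded l M \<beta> (g (Suc m))"
    using approx_bounded_unfold_step[OF steps[OF m(2)] m(3)[unfolded M_def]] unfolding M_def by blast
  moreover have "N \<le> Suc m" using m(1) by simp
  ultimately show False
    using approx_bounded_expires[OF steps still N next_M M_def] by blast
qed

section \<open>Falsified branches of a co-proof\<close>

type_synonym ('v, 'i) aseq = "('v, 'i) afm list \<times> ('v, 'i) afm list"

definition refutes :: "'n list set \<Rightarrow> ('n list \<Rightarrow> 'v \<Rightarrow> bool) \<Rightarrow> 'n list \<Rightarrow> 'v seq \<Rightarrow>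
    ('v, 'n list set) aseq \<Rightarrow> bool" where
  "refutes T V w S A \<longleftrightarrow> w \<in> T \<and> map erase (fst A) = fst S \<and> map erase (snd A) = snd S \<and>
     (\<forall>a\<in>set (fst A). fits T V True w a) \<and> (\<forall>a\<in>set (snd A). fits T V False w a)"

lemma refutes_pair [simp]:
  "refutes T V w (\<Phi>, \<Psi>) (X, Y) \<longleftrightarrow> w \<in> T \<and> map erase X = \<Phi> \<and> map erase Y = \<Psi> \<and>
     (\<forall>a\<in>set X. fits T V True w a) \<and> (\<forall>a\<in>set Y. fits T V False w a)"
  by (simp add: refutes_def)

fun aocc :: "('v, 'i) aseq \<Rightarrow> occ \<Rightarrow> ('v, 'i) afm" where
  "aocc (X, Y) (l, j) = (if l then X ! j else Y ! j)"

definition tracks :: "rule \<Rightarrow> 'v seq \<Rightarrow> 'v seq \<Rightarrow> ('v, 'i) aseq \<Rightarrow> ('v, 'i) aseq \<Rightarrow> bool" where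
  "tracks r S S' A A' \<longleftrightarrow> (\<forall>oc oc'. valid_occ S oc \<longrightarrow> link r S oc oc' \<longrightarrow> valid_occ S' oc' \<longrightarrow>
     (if principal r S oc then thread_step (fst oc) (aocc A oc) (aocc A' oc') else aocc A' oc' = aocc A oc))"

definition refuted_premise :: "'n list set \<Rightarrow> ('n list \<Rightarrow> 'v \<Rightarrow> bool) \<Rightarrow> rule \<Rightarrow> 'v seq \<Rightarrow>
    ('v, 'n list set) aseq \<Rightarrow> 'v seq \<Rightarrow> bool" where
  "refuted_premise T V r S A S' \<longleftrightarrow> (\<exists>w' A'. refutes T V w' S' A' \<and> tracks r S S' A A')"

lemma refuted_premiseI:
  "refutes T V w' S' A' \<Longrightarrow> tracks r S S' A A' \<Longrightarrow> S' \<in> set Ss \<Longrightarrow>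
    \<exists>S'\<in>set Ss. refuted_premise T V r S A S'"
  unfolding refuted_premise_def by blast

lemma erase_eq_iff:
  "erase g = Var x \<longleftrightarrow> g = AVar x"
  "erase g = NVar x \<longleftrightarrow> g = ANVar x"
  "erase g = Box a \<longleftrightarrow> (\<exists>c. g = ABox c \<and> erase c = a)"
  "erase g = Dia a \<longleftrightarrow> (\<exists>c. g = ADia c \<and> erase c = a)"
  "erase g = Conj G \<longleftrightarrow> (\<exists>G'. g = AConj G' \<and> map erase G' = G)"
  "erase g = Disj G \<longleftrightarrow> (\<exists>G'. g = ADisj G' \<and> map erase G' = G)"
  "Conj G = erase g \<longleftrightarrow> (\<exists>G'. g = AConj G' \<and> map erase G' = G)"
  "Disj G = erase g \<longleftrightarrow> (\<exists>G'. g = ADisj G' \<and> map erase G' = G)"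
  "Box a = erase g \<longleftrightarrow> (\<exists>c. g = ABox c \<and> erase c = a)"
  by (cases g; auto)+

lemma map_eq_map_lift:
  assumes "\<And>x y. f x = C y \<Longrightarrow> \<exists>z. x = D z \<and> f z = y"
  shows "map f xs = map C ys \<Longrightarrow> \<exists>zs. xs = map D zs \<and> map f zs = ys"
proof (induction xs arbitrary: ys)
  case (Cons x xs)
  then obtain y ys' where "ys = y # ys'" "f x = C y" "map f xs = map C ys'" by auto
  with Cons.IH assms show ?case by (metis list.simps(9))
qed simp

lemma fits_AConj:
  "fits T V True w (AConj G) \<Longrightarrow> g \<in> set G \<Longrightarrow> fits T V True w g"
  "w \<in> T \<Longrightarrow> fits T V False w (AConj G) \<Longrightarrow> \<exists>g\<in>set G. fits T V False w g"
  by (auto simp: fits_def)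

lemma fits_ADisj:
  "fits T V True w (ADisj G) \<Longrightarrow> \<exists>g\<in>set G. fits T V True w g"
  "fits T V False w (ADisj G) \<Longrightarrow> g \<in> set G \<Longrightarrow> fits T V False w g"
  by (auto simp: fits_def dest: subsetD[OF asem_subset])

lemma fits_ABox:
  "fits T V True w (ABox a) \<Longrightarrow> w @ [c] \<in> T \<Longrightarrow> fits T V True (w @ [c]) a"
  "w \<in> T \<Longrightarrow> fits T V False w (ABox a) \<Longrightarrow> \<exists>c. w @ [c] \<in> T \<and> fits T V False (w @ [c]) a"
  by (auto simp: fits_def)

lemma fits_ADia:
  "fits T V True w (ADia a) \<Longrightarrow> \<exists>c. w @ [c] \<in> T \<and> fits T V True (w @ [c]) a"
  "w \<in> T \<Longrightarrow> fits T V False w (ADia a) \<Longrightarrow> w @ [c] \<in> T \<Longrightarrow> fits T V False (w @ [c]) a"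
  by (auto simp: fits_def dest: subsetD[OF asem_subset])

lemma refuted_premise_ExL:
  assumes "rule_inst (ExL i) (\<Phi>, \<Psi>) Ss" and "refutes T V w (\<Phi>, \<Psi>) (X, Y)"
  shows "\<exists>S'\<in>set Ss. refuted_premise T V (ExL i) (\<Phi>, \<Psi>) (X, Y) S'"
  using assms
  by (intro refuted_premiseI[of T V w "(swap_at i \<Phi>, \<Psi>)" "(swap_at i X, Y)"])
    (auto simp: swap_at_def map_update nth_list_update tracks_def)

lemma refuted_premise_ExR:
  assumes "rule_inst (ExR i) (\<Phi>, \<Psi>) Ss" and "refutes T V w (\<Phi>, \<Psi>) (X, Y)"
  shows "\<exists>S'\<in>set Ss. refuted_premise T V (ExR i) (\<Phi>, \<Psi>) (X, Y) S'"
  using assms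
  by (intro refuted_premiseI[of T V w "(\<Phi>, swap_at i \<Psi>)" "(X, swap_at i Y)"])
    (auto simp: swap_at_def map_update nth_list_update tracks_def)

lemma refuted_premise_CtrL:
  assumes "rule_inst CtrL (\<Phi>, \<Psi>) Ss" and "refutes T V w (\<Phi>, \<Psi>) (X, Y)"
  shows "\<exists>S'\<in>set Ss. refuted_premise T V CtrL (\<Phi>, \<Psi>) (X, Y) S'"
proof -
  obtain a \<Phi>' g X' where "\<Phi> = a # \<Phi>'" "Ss = [(a # a # \<Phi>', \<Psi>)]" "X = g # X'"
    using assms by (auto simp: map_eq_Cons_conv)
  then show ?thesis
    using assms(2)
    by (intro refuted_premiseI[of T V w "(a # a # \<Phi>', \<Psi>)" "(g # g # X', Y)"]) (auto simp: tracks_def nth_Cons split: nat.split)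
qed

lemma refuted_premise_CtrR:
  assumes "rule_inst CtrR (\<Phi>, \<Psi>) Ss" and "refutes T V w (\<Phi>, \<Psi>) (X, Y)"
  shows "\<exists>S'\<in>set Ss. refuted_premise T V CtrR (\<Phi>, \<Psi>) (X, Y) S'"
proof -
  obtain a \<Psi>' g Y' where "\<Psi> = \<Psi>' @ [a]" "Ss = [(\<Phi>, \<Psi>' @ [a, a])]" "Y = Y' @ [g]"
    "length Y' = length \<Psi>'"
    using assms by (auto simp: map_eq_append_conv)
  then show ?thesis
    using assms(2)
    by (intro refuted_premiseI[of T V w "(\<Phi>, \<Psi>' @ [a, a])" "(X, Y' @ [g, g])"]) (auto simp: tracks_def nth_append)
qed

lemma refuted_premise_WkL:
  assumes "rule_inst WkL (\<Phi>, \<Psi>) Ss" and "refutes T V w (\<Phi>, \<Psi>) (X, Y)"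
  shows "\<exists>S'\<in>set Ss. refuted_premise T V WkL (\<Phi>, \<Psi>) (X, Y) S'"
proof -
  obtain a \<Phi>' g X' where "\<Phi> = a # \<Phi>'" "Ss = [(\<Phi>', \<Psi>)]" "X = g # X'"
    using assms by (auto simp: map_eq_Cons_conv)
  then show ?thesis
    using assms(2)
    by (intro refuted_premiseI[of T V w "(\<Phi>', \<Psi>)" "(X', Y)"]) (auto simp: tracks_def nth_Cons split: nat.split)
qed

lemma refuted_premise_WkR:
  assumes "rule_inst WkR (\<Phi>, \<Psi>) Ss" and "refutes T V w (\<Phi>, \<Psi>) (X, Y)"
  shows "\<exists>S'\<in>set Ss. refuted_premise T V WkR (\<Phi>, \<Psi>) (X, Y) S'"
proof -
  obtain a \<Psi>' g Y' where "\<Psi> = \<Psi>' @ [a]" "Ss = [(\<Phi>, \<Psi>')]" "Y = Y' @ [g]"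
    "length Y' = length \<Psi>'"
    using assms by (auto simp: map_eq_append_conv)
  then show ?thesis
    using assms(2)
    by (intro refuted_premiseI[of T V w "(\<Phi>, \<Psi>')" "(X, Y')"]) (auto simp: tracks_def nth_append)
qed

lemma refuted_premise_AndL:
  assumes "rule_inst (AndL k) (\<Phi>, \<Psi>) Ss" and "refutes T V w (\<Phi>, \<Psi>) (X, Y)"
  shows "\<exists>S'\<in>set Ss. refuted_premise T V (AndL k) (\<Phi>, \<Psi>) (X, Y) S'"
proof -
  obtain G \<Phi>' G' X' where S: "\<Phi> = Conj G # \<Phi>'" "Ss = [(G ! k # \<Phi>', \<Psi>)]" "k < length G"
    and X: "X = AConj G' # X'" "map erase G' = G"
    using assms by (auto simp: map_eq_Cons_conv erase_eq_iff)
  then have "G' ! k \<in> set G'" by auto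
  moreover from this have "fits T V True w (G' ! k)"
    using fits_AConj(1) assms(2) X by auto
  ultimately show ?thesis
    using assms(2) S X
    by (intro refuted_premiseI[of T V w "(G ! k # \<Phi>', \<Psi>)" "(G' ! k # X', Y)"])
      (auto simp: tracks_def nth_Cons intro: thread_step.conj split: nat.split)
qed

lemma refuted_premise_OrL:
  assumes "rule_inst OrL (\<Phi>, \<Psi>) Ss" and "refutes T V w (\<Phi>, \<Psi>) (X, Y)"
  shows "\<exists>S'\<in>set Ss. refuted_premise T V OrL (\<Phi>, \<Psi>) (X, Y) S'"
proof -
  obtain G \<Phi>' G' X' where "\<Phi> = Disj G # \<Phi>'" "Ss = map (\<lambda>g. (g # \<Phi>', \<Psi>)) G"
    and X: "X = ADisj G' # X'" "map erase G' = G"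
    using assms by (auto simp: map_eq_Cons_conv erase_eq_iff)
  moreover obtain h where "h \<in> set G'" "fits T V True w h"
    using assms(2) X fits_ADisj(1)[of T V w G'] by auto
  ultimately show ?thesis
    using assms(2)
    by (intro refuted_premiseI[of T V w "(erase h # \<Phi>', \<Psi>)" "(h # X', Y)"])
      (auto simp: tracks_def nth_Cons intro: thread_step.disj split: nat.split)
qed

lemma refuted_premise_FixL:
  assumes "rule_inst FixL (\<Phi>, \<Psi>) Ss" and "refutes T V w (\<Phi>, \<Psi>) (X, Y)"
  shows "\<exists>S'\<in>set Ss. refuted_premise T V FixL (\<Phi>, \<Psi>) (X, Y) S'"
proof -
  obtain g \<Phi>' X' where "\<Phi> = erase g # \<Phi>'" "Ss = [(unfold (erase g) # \<Phi>', \<Psi>)]"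
    and X: "X = g # X'" "is_fix (erase g)"
    using assms by (auto simp: map_eq_Cons_conv)
  moreover obtain g' where "erase g' = unfold (erase g)" "fits T V True w g'" "thread_step True g g'"
    using fits_unfold[of w T V True g] assms(2) X by auto
  ultimately show ?thesis
    using assms(2)
    by (intro refuted_premiseI[of T V w "(unfold (erase g) # \<Phi>', \<Psi>)" "(g' # X', Y)"])
      (auto simp: tracks_def nth_Cons split: nat.split)
qed

lemma refuted_premise_AndR:
  assumes "rule_inst AndR (\<Phi>, \<Psi>) Ss" and "refutes T V w (\<Phi>, \<Psi>) (X, Y)"
  shows "\<exists>S'\<in>set Ss. refuted_premise T V AndR (\<Phi>, \<Psi>) (X, Y) S'"
proof -
  obtain G \<Psi>' G' Y' where "\<Psi> = \<Psi>' @ [Conj G]" "Ss = map (\<lambda>g. (\<Phi>, \<Psi>' @ [g])) G"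
    and Y: "Y = Y' @ [AConj G']" "map erase G' = G" "length Y' = length \<Psi>'"
    using assms by (auto simp: map_eq_append_conv erase_eq_iff)
  moreover obtain h where "h \<in> set G'" "fits T V False w h"
    using assms(2) Y fits_AConj(2)[of w T V G'] by auto
  ultimately show ?thesis
    using assms(2)
    by (intro refuted_premiseI[of T V w "(\<Phi>, \<Psi>' @ [erase h])" "(X, Y' @ [h])"])
      (auto simp: tracks_def nth_append intro: thread_step.conj)
qed

lemma refuted_premise_OrR:
  assumes "rule_inst (OrR k) (\<Phi>, \<Psi>) Ss" and "refutes T V w (\<Phi>, \<Psi>) (X, Y)"
  shows "\<exists>S'\<in>set Ss. refuted_premise T V (OrR k) (\<Phi>, \<Psi>) (X, Y) S'"
proof -
  obtain G \<Psi>' G' Y' where S: "\<Psi> = \<Psi>' @ [Disj G]" "Ss = [(\<Phi>, \<Psi>' @ [G ! k])]" "k < length G"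
    and Y: "Y = Y' @ [ADisj G']" "map erase G' = G" "length Y' = length \<Psi>'"
    using assms by (auto simp: map_eq_append_conv erase_eq_iff)
  then have "G' ! k \<in> set G'" by auto
  moreover from this have "fits T V False w (G' ! k)"
    using fits_ADisj(2) assms(2) Y by auto
  ultimately show ?thesis
    using assms(2) S Y
    by (intro refuted_premiseI[of T V w "(\<Phi>, \<Psi>' @ [G ! k])" "(X, Y' @ [G' ! k])"])
      (auto simp: tracks_def nth_append intro: thread_step.disj)
qed

lemma refuted_premise_FixR:
  assumes "rule_inst FixR (\<Phi>, \<Psi>) Ss" and "refutes T V w (\<Phi>, \<Psi>) (X, Y)"
  shows "\<exists>S'\<in>set Ss. refuted_premise T V FixR (\<Phi>, \<Psi>) (X, Y) S'"
proof -
  obtain g \<Psi>' Y' where "\<Psi> = \<Psi>' @ [erase g]" "Ss = [(\<Phi>, \<Psi>' @ [unfold (erase g)])]"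
    and Y: "Y = Y' @ [g]" "is_fix (erase g)" "length Y' = length \<Psi>'"
    using assms by (auto simp: map_eq_append_conv)
  moreover obtain g' where "erase g' = unfold (erase g)" "fits T V False w g'" "thread_step False g g'"
    using fits_unfold[of w T V False g] assms(2) Y by auto
  ultimately show ?thesis
    using assms(2)
    by (intro refuted_premiseI[of T V w "(\<Phi>, \<Psi>' @ [unfold (erase g)])" "(X, Y' @ [g'])"])
      (auto simp: tracks_def nth_append)
qed

lemma map_erase_eq_map_Box: "map erase xs = map Box ys \<Longrightarrow> \<exists>zs. xs = map ABox zs \<and> map erase zs = ys"
  by (rule map_eq_map_lift[of erase Box ABox]) (auto simp: erase_eq_iff)

lemma map_erase_eq_map_Dia: "map erase xs = map Dia ys \<Longrightarrow> \<exists>zs. xs = map ADia zs \<and> map erase zs = ys"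
  by (rule map_eq_map_lift[of erase Dia ADia]) (auto simp: erase_eq_iff)

lemma refuted_premise_DiaL:
  assumes "rule_inst DiaL (\<Phi>, \<Psi>) Ss" and "refutes T V w (\<Phi>, \<Psi>) (X, Y)"
  shows "\<exists>S'\<in>set Ss. refuted_premise T V DiaL (\<Phi>, \<Psi>) (X, Y) S'"
proof -
  obtain a \<Phi>' \<Psi>' where S: "\<Phi> = Dia a # map Box \<Phi>'" "\<Psi> = map Dia \<Psi>'" "Ss = [(a # \<Phi>', \<Psi>')]"
    using assms(1) by auto
  obtain c X' where X: "X = ADia c # X'" "erase c = a" "map erase X' = map Box \<Phi>'"
    using assms(2) S by (auto simp: map_eq_Cons_conv erase_eq_iff)
  obtain Z where Z: "X' = map ABox Z" "map erase Z = \<Phi>'"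
    using map_erase_eq_map_Box[OF X(3)] by blast
  obtain W where W: "Y = map ADia W" "map erase W = \<Psi>'"
    using map_erase_eq_map_Dia assms(2) S by auto
  obtain ch where ch: "w @ [ch] \<in> T" "fits T V True (w @ [ch]) c"
    using fits_ADia(1)[of T V w c] assms(2) X by auto
  have "refutes T V (w @ [ch]) (a # \<Phi>', \<Psi>') (c # Z, W)"
    using assms(2) X Z W ch by (auto intro: fits_ABox(1) fits_ADia(2))
  moreover have "thread_step l (aocc (X, Y) (l, j)) (aocc (c # Z, W) (l, j))"
    if "valid_occ (\<Phi>, \<Psi>) (l, j)" for l j
    using that S X Z W by (cases l) (auto simp: nth_Cons' intro: thread_step.intros)
  then have "tracks DiaL (\<Phi>, \<Psi>) (a # \<Phi>', \<Psi>') (X, Y) (c # Z, W)"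
    unfolding tracks_def by auto
  ultimately show ?thesis
    using S by (intro refuted_premiseI) auto
qed

lemma refuted_premise_BoxR:
  assumes "rule_inst BoxR (\<Phi>, \<Psi>) Ss" and "refutes T V w (\<Phi>, \<Psi>) (X, Y)"
  shows "\<exists>S'\<in>set Ss. refuted_premise T V BoxR (\<Phi>, \<Psi>) (X, Y) S'"
proof -
  obtain a \<Phi>' \<Psi>' where S: "\<Phi> = map Box \<Phi>'" "\<Psi> = map Dia \<Psi>' @ [Box a]" "Ss = [(\<Phi>', \<Psi>' @ [a])]"
    using assms(1) by auto
  obtain c Y' where Y: "Y = Y' @ [ABox c]" "erase c = a" "map erase Y' = map Dia \<Psi>'"
    using assms(2) S by (auto simp: map_eq_append_conv erase_eq_iff)
  obtain W where W: "Y' = map ADia W" "map erase W = \<Psi>'"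
    using map_erase_eq_map_Dia[OF Y(3)] by blast
  obtain Z where Z: "X = map ABox Z" "map erase Z = \<Phi>'"
    using map_erase_eq_map_Box assms(2) S by auto
  obtain ch where ch: "w @ [ch] \<in> T" "fits T V False (w @ [ch]) c"
    using fits_ABox(2)[of w T V c] assms(2) Y by auto
  have "refutes T V (w @ [ch]) (\<Phi>', \<Psi>' @ [a]) (Z, W @ [c])"
    using assms(2) Y Z W ch by (auto intro: fits_ABox(1) fits_ADia(2))
  moreover have "tracks BoxR (\<Phi>, \<Psi>) (\<Phi>', \<Psi>' @ [a]) (X, Y) (Z, W @ [c])"
    unfolding tracks_def using S Y Z W
    by (auto simp: nth_append intro: thread_step.intros)
  ultimately show ?thesis
    using S by (intro refuted_premiseI) auto
qed

lemma refutes_not_axiom: "rule_inst Ax (\<Phi>, \<Psi>) Ss \<Longrightarrow> \<not> refutes T V w (\<Phi>, \<Psi>) (X, Y)"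
  by (auto simp: map_eq_Cons_conv erase_eq_iff fits_def)

lemma refuted_premise_exists:
  assumes "rule_inst r S Ss" and "refutes T V w S A"
  shows "\<exists>S'\<in>set Ss. refuted_premise T V r S A S'"
proof -
  obtain \<Phi> \<Psi> X Y where "S = (\<Phi>, \<Psi>)" "A = (X, Y)" by fastforce
  with assms show ?thesis
    by (cases r) (blast dest: refutes_not_axiom intro: refuted_premise_ExL refuted_premise_ExR
        refuted_premise_CtrL refuted_premise_CtrR refuted_premise_WkL refuted_premise_WkR
        refuted_premise_AndL refuted_premise_OrL refuted_premise_FixL refuted_premise_DiaL
        refuted_premise_AndR refuted_premise_OrR refuted_premise_FixR refuted_premise_BoxR)+
qed

lemma erase_aocc: "refutes T V w S A \<Longrightarrow> valid_occ S oc \<Longrightarrow> erase (aocc A oc) = fm_at S oc"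
  by (cases S; cases A; cases oc) (auto simp: refutes_def)

lemma link_side: "link r S oc oc' \<Longrightarrow> fst oc' = fst oc"
  by (cases r; cases S; cases oc) (auto split: if_splits)

lemma refuted_branch:
  fixes t :: "'v dtree" and T :: "'n list set"
  assumes "wf_tree t" and "refutes T V w (sq t) A"
  obtains b ws As where "is_branch t b" and "\<And>n. refutes T V (ws n) (sq (b n)) (As n)"
    and "\<And>n. tracks (rl (b n)) (sq (b n)) (sq (b (Suc n))) (As n) (As (Suc n))"
proof -
  define P where "P n x \<longleftrightarrow> fst x \<in> subtrees t \<and> refutes T V (fst (snd x)) (sq (fst x)) (snd (snd x))
    \<and> (n = 0 \<longrightarrow> fst x = t)" for n :: nat and x :: "'v dtree \<times> 'n list \<times> ('v, 'n list set) aseq"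
  define Q where "Q x y \<longleftrightarrow> fst y \<in> set (kids (fst x))
    \<and> tracks (rl (fst x)) (sq (fst x)) (sq (fst y)) (snd (snd x)) (snd (snd y))"
    for x y :: "'v dtree \<times> 'n list \<times> ('v, 'n list set) aseq"
  have "\<exists>y. P (Suc n) y \<and> Q x y" if "P n x" for n x
  proof -
    obtain s w A where x: "x = (s, w, A)" by (cases x)
    with that have s: "s \<in> subtrees t" "refutes T V w (sq s) A" unfolding P_def by auto
    then have "rule_inst (rl s) (sq s) (map sq (kids s))"
      using assms(1) unfolding wf_tree_def by blast
    from refuted_premise_exists[OF this s(2)] obtain s' w' A' where
      "s' \<in> set (kids s)" "refutes T V w' (sq s') A'" "tracks (rl s) (sq s) (sq s') A A'"
      unfolding refuted_premise_def by auto
    then show ?thesis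
      using s(1) subtrees.kid x unfolding P_def Q_def by (intro exI[of _ "(s', w', A')"]) auto
  qed
  moreover have "P 0 (t, w, A)"
    using assms(2) subtrees.self unfolding P_def by simp
  ultimately obtain f where "\<And>n. P n (f n) \<and> Q (f n) (f (Suc n))"
    using dependent_nat_choice[of P "\<lambda>_. Q"] by blast
  then show thesis
    using that[of "\<lambda>n. fst (f n)" "\<lambda>n. fst (snd (f n))" "\<lambda>n. snd (snd (f n))"]
    unfolding P_def Q_def is_branch_def by auto
qed

lemma good_branch_fix_thread:
  assumes "good_branch b"
  shows "\<exists>k oc a. is_trace b k oc \<and> fix_fm (fst (oc 0)) a \<in> inf_forms b k oc \<and>
    (\<forall>f\<in>inf_forms b k oc. f \<noteq> fix_fm (fst (oc 0)) a \<longrightarrow> rk (fix_fm (fst (oc 0)) a) < rk f)"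
proof -
  obtain k oc where "is_trace b k oc"
    and "(fst (oc 0) \<and> mu_thread b k oc) \<or> (\<not> fst (oc 0) \<and> nu_thread b k oc)"
    using assms unfolding good_branch_def by blast
  then show ?thesis
    unfolding mu_thread_def nu_thread_def min_is_mu_def min_is_nu_def by (metis fix_fm.simps)
qed

lemma refuted_branch_not_good:
  assumes refutes: "\<And>n. refutes T V (ws n) (sq (b n)) (As n)"
    and tracks: "\<And>n. tracks (rl (b n)) (sq (b n)) (sq (b (Suc n))) (As n) (As (Suc n))"
  shows "\<not> good_branch b"
proof
  assume "good_branch b"
  then obtain k oc a where trace: "is_trace b k oc"
    and often: "fix_fm (fst (oc 0)) a \<in> inf_forms b k oc"
    and minimal: "\<forall>f\<in>inf_forms b k oc. f \<noteq> fix_fm (fst (oc 0)) a \<longrightarrow> rk (fix_fm (fst (oc 0)) a) < rk f"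
    using good_branch_fix_thread by blast
  define g where "g n = aocc (As (k + n)) (oc n)" for n
  have valid: "valid_occ (sq (b (k + n))) (oc n)"
    and link: "link (rl (b (k + n))) (sq (b (k + n))) (oc n) (oc (Suc n))" for n
    using trace unfolding is_trace_def by auto
  have side: "fst (oc n) = fst (oc 0)" for n
    by (induction n) (use link_side[OF link] in auto)
  have follows: "if princ_step b k oc n then thread_step (fst (oc 0)) (g n) (g (Suc n)) else g (Suc n) = g n"
    for n
  proof -
    have "valid_occ (sq (b (Suc (k + n)))) (oc (Suc n))"
      using valid[of "Suc n"] by simp
    then have "if principal (rl (b (k + n))) (sq (b (k + n))) (oc n)
      then thread_step (fst (oc n)) (aocc (As (k + n)) (oc n)) (aocc (As (Suc (k + n))) (oc (Suc n)))
      else aocc (As (Suc (k + n))) (oc (Suc n)) = aocc (As (k + n)) (oc n)"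
      using tracks[of "k + n"] valid[of n] link[of n] unfolding tracks_def by blast
    then show ?thesis
      unfolding princ_step_def g_def side[of n] by simp
  qed
  have "erase (g n) = fm_at (sq (b (k + n))) (oc n)" for n
    unfolding g_def by (rule erase_aocc[OF refutes valid])
  then have "inf_forms b k oc = {f. \<exists>\<^sub>\<infinity>n. princ_step b k oc n \<and> erase (g n) = f}"
    unfolding inf_forms_def by simp
  then show False
    using annotated_thread_absurd[of "princ_step b k oc" "fst (oc 0)" g a] follows often minimal
    by (simp split: if_splits)
qed

theorem theorem3p4:
  fixes \<Phi> \<Psi> :: "'v fm list" and T :: "'n list set" and V :: "'n list \<Rightarrow> 'v \<Rightarrow> bool"
  assumes "\<forall>f\<in>set \<Phi>. lc 0 f" and "\<forall>f\<in>set \<Psi>. lc 0 f"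
    and "has_coproof (\<Phi>, \<Psi>)"
    and "tree_model T"
    and "\<forall>f\<in>set \<Phi>. holds_root T V f"
  shows "\<exists>f\<in>set \<Psi>. holds_root T V f"
proof (rule ccontr)
  assume refuted: "\<not> (\<exists>f\<in>set \<Psi>. holds_root T V f)"
  obtain t where t: "sq t = (\<Phi>, \<Psi>)" "coproof t"
    using assms(3) unfolding has_coproof_def by blast
  have "refutes T V [] (sq t) (map embed \<Phi>, map embed \<Psi>)"
    using assms(1,2,4,5) refuted t(1)
    by (auto simp: fits_def holds_root_def asem_embed polarised_embed tree_model_def map_idI)
  then obtain b ws As where branch: "is_branch t b"
    and refutes: "\<And>n. refutes T V (ws n) (sq (b n)) (As n)"
    and tracks: "\<And>n. tracks (rl (b n)) (sq (b n)) (sq (b (Suc n))) (As n) (As (Suc n))"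
    using refuted_branch t(2) unfolding coproof_def by metis
  have "good_branch b"
    using t(2) branch unfolding coproof_def by blast
  with refuted_branch_not_good[where b = b, OF refutes tracks] show False
    by blast
qed

end
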